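(* Let $m\ge 2$, $d_1,\dots,d_m\ge 2$, and let $\rho$ be a density matrix on $\mathbb{C}^{d_1}\otimes\cdots\otimes\mathbb{C}^{d_m}$. For each $i=1,\dots,m$ let $\mathcal{P}^{(i)}=\{P^{(i)}_j\}_{j=1}^{d_i^2}$ be a general SIC-POVM on $\mathbb{C}^{d_i}$ with parameter $a_i$. Let $d=\min\{d_1^2,\dots,d_m^2\}$ and define $$J(\rho)=\max_{\sigma_1,\dots,\sigma_m}\sum_{j=1}^{d}\mathrm{Tr}\Big[\Big(\bigotimes_{i=1}^m P^{(i)}_{\sigma_i(j)}\Big)\rho\Big],$$ where the maximum runs over all tuples of injective maps $\sigma_i:\{1,\dots,d\}\to\{1,\dots,d_i^2\}$, $i=1,\dots,m$. If $\rho$ is fully separable, then $$J(\rho)\le \min_{1\le i\neq k\le m}\sqrt{\frac{a_id_i^2+1}{d_i(d_i+1)}}\,\sqrt{\frac{a_kd_k^2+1}{d_k(d_k+1)}}.$$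
   Context: A general SIC-POVM on $\mathbb{C}^{n}$ with parameter $a$ is a set of $n^2$ positive semidefinite operators $\{P_\alpha\}_{\alpha=1}^{n^2}$ on $\mathbb{C}^{n}$ such that $\sum_{\alpha=1}^{n^2}P_\alpha=I$, $\mathrm{Tr}(P_\alpha^2)=a$ for all $\alpha$, and $\mathrm{Tr}(P_\alpha P_\beta)=\frac{1-na}{n(n^2-1)}$ for all $\alpha\neq\beta$; here $\frac{1}{n^3}<a\le\frac{1}{n^2}$. A density matrix on $\mathbb{C}^{d_1}\otimes\cdots\otimes\mathbb{C}^{d_m}$ is fully separable if it is a convex combination of product states $\rho_1\otimes\cdots\otimes\rho_m$. *)

theory Defs
  imports "Jordan_Normal_Form.Matrix" "HOL-Library.FuncSet"
begin

(* Kronecker (tensor) product of complex matrices; the first factor is the outermost one *)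
definition kron :: "complex mat \<Rightarrow> complex mat \<Rightarrow> complex mat" where
  "kron A B = mat (dim_row A * dim_row B) (dim_col A * dim_col B)
     (\<lambda>(i, j). A $$ (i div dim_row B, j div dim_col B) * B $$ (i mod dim_row B, j mod dim_col B))"

fun kron_list :: "complex mat list \<Rightarrow> complex mat" where
  "kron_list [] = 1\<^sub>m 1"
| "kron_list (A # As) = kron A (kron_list As)"

definition trace :: "complex mat \<Rightarrow> complex" where
  "trace A = (\<Sum>i<dim_row A. A $$ (i, i))"

definition psd :: "nat \<Rightarrow> complex mat \<Rightarrow> bool" where
  "psd n A \<longleftrightarrow> A \<in> carrier_mat n n \<and>
     (\<forall>v \<in> carrier_vec n. let q = (\<Sum>i<n. cnj (v $ i) * (A *\<^sub>v v) $ i) in Im q = 0 \<and> Re q \<ge> 0)"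

definition density_matrix :: "nat \<Rightarrow> complex mat \<Rightarrow> bool" where
  "density_matrix n \<rho> \<longleftrightarrow> psd n \<rho> \<and> trace \<rho> = 1"

definition general_sic_povm :: "nat \<Rightarrow> real \<Rightarrow> (nat \<Rightarrow> complex mat) \<Rightarrow> bool" where
  "general_sic_povm n a P \<longleftrightarrow>
     1 / real n ^ 3 < a \<and> a \<le> 1 / real n ^ 2 \<and>
     (\<forall>\<alpha> < n^2. psd n (P \<alpha>)) \<and>
     foldr (+) (map P [0..<n^2]) (0\<^sub>m n n) = 1\<^sub>m n \<and>
     (\<forall>\<alpha> < n^2. trace (P \<alpha> * P \<alpha>) = complex_of_real a) \<and>
     (\<forall>\<alpha> < n^2. \<forall>\<beta> < n^2. \<alpha> \<noteq> \<beta> \<longrightarrow>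
        trace (P \<alpha> * P \<beta>) = complex_of_real ((1 - real n * a) / (real n * (real n ^ 2 - 1))))"

definition fully_separable :: "nat \<Rightarrow> (nat \<Rightarrow> nat) \<Rightarrow> complex mat \<Rightarrow> bool" where
  "fully_separable m d \<rho> \<longleftrightarrow>
     (\<exists>K (p :: nat \<Rightarrow> real) (\<sigma> :: nat \<Rightarrow> nat \<Rightarrow> complex mat).
        (\<forall>k<K. p k \<ge> 0) \<and> (\<Sum>k<K. p k) = 1 \<and>
        (\<forall>k<K. \<forall>i<m. density_matrix (d i) (\<sigma> k i)) \<and>
        \<rho> = foldr (+) (map (\<lambda>k. complex_of_real (p k) \<cdot>\<^sub>m kron_list (map (\<sigma> k) [0..<m])) [0..<K])
              (0\<^sub>m (\<Prod>i<m. d i) (\<Prod>i<m. d i)))"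

definition min_sq_dim :: "nat \<Rightarrow> (nat \<Rightarrow> nat) \<Rightarrow> nat" where
  "min_sq_dim m d = Min {d i ^ 2 | i. i < m}"

definition inj_tuples :: "nat \<Rightarrow> (nat \<Rightarrow> nat) \<Rightarrow> (nat \<Rightarrow> nat \<Rightarrow> nat) set" where
  "inj_tuples m d = (\<Pi>\<^sub>E i\<in>{..<m}. {s \<in> {..<min_sq_dim m d} \<rightarrow>\<^sub>E {..<d i ^ 2}. inj_on s {..<min_sq_dim m d}})"

(* J(\<rho>); the traces are real for PSD arguments, we take real parts *)
definition J_val :: "nat \<Rightarrow> (nat \<Rightarrow> nat) \<Rightarrow> (nat \<Rightarrow> nat \<Rightarrow> complex mat) \<Rightarrow> complex mat \<Rightarrow> real" where
  "J_val m d P \<rho> = Max ((\<lambda>\<sigma>. Re (\<Sum>j<min_sq_dim m d.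
       trace (kron_list (map (\<lambda>i. P i (\<sigma> i j)) [0..<m]) * \<rho>))) ` inj_tuples m d)"

end

theory Submission
  imports Defs "HOL-Analysis.L2_Norm" "HOL-Library.Quadratic_Discriminant"
begin

text \<open>For a product state \<open>\<rho>\<^sub>1 \<otimes> \<dots> \<otimes> \<rho>\<^sub>m\<close> the \<open>j\<close>-th term of \<open>J\<close> factorises into
  \<open>\<Prod>\<^sub>i p\<^sub>i(\<sigma>\<^sub>i j)\<close> with outcome probabilities \<open>p\<^sub>i(\<alpha>) = Tr(P\<^sub>i(\<alpha>) \<rho>\<^sub>i) \<in> [0, 1]\<close>.
  Dropping all factors except those of two parties \<open>i \<noteq> k\<close> and applying Cauchy--Schwarz bounds
  the sum over \<open>j\<close> by the square roots of the indices of coincidence \<open>\<Sum>\<^sub>\<alpha> p\<^sub>i(\<alpha>)\<^sup>2\<close>, and the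
  bound survives convex combinations. For a general SIC-POVM on \<open>\<complex>\<^sup>n\<close> with overlap \<open>b\<close> between
  distinct elements, pick \<open>t\<close> with \<open>n t\<^sup>2 - 2 t / n + b = 0\<close>: the operators \<open>P(\<alpha>) - t I\<close> are then pairwise
  orthogonal of squared Hilbert--Schmidt norm \<open>a - b\<close>, so Bessel's inequality together with
  \<open>Tr \<rho>\<^sup>2 \<le> 1\<close> gives \<open>\<Sum>\<^sub>\<alpha> (p(\<alpha>) - t)\<^sup>2 \<le> a - b\<close>, which rearranges to
  \<open>\<Sum>\<^sub>\<alpha> p(\<alpha>)\<^sup>2 \<le> (a n\<^sup>2 + 1) / (n (n + 1))\<close>.\<close>

lemma sum_lessThan_mult_div_mod:
  "(\<Sum>k<a * (b::nat). f (k div b) (k mod b)) = (\<Sum>i<a. \<Sum>j<b. (f i j :: 'c::comm_monoid_add))"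
proof (cases "b = 0")
  case False
  have "(\<Sum>i<a. \<Sum>j<b. f i j) = (\<Sum>(i, j)\<in>{..<a} \<times> {..<b}. f i j)"
    by (simp add: sum.cartesian_product)
  also have "\<dots> = (\<Sum>k<a * b. f (k div b) (k mod b))"
  proof (rule sum.reindex_bij_witness[of _ "\<lambda>k. (k div b, k mod b)" "\<lambda>(i, j). i * b + j"])
    fix k assume "k \<in> {..<a * b}"
    then show "(k div b, k mod b) \<in> {..<a} \<times> {..<b}"
      using False by (auto simp: less_mult_imp_div_less)
  next
    fix p assume "p \<in> {..<a} \<times> {..<b}"
    then obtain i j where p: "p = (i, j)" "i < a" "j < b" by blast
    have "i * b + j < (i + 1) * b" using p by simp
    also have "\<dots> \<le> a * b" using p by (intro mult_le_mono1) simp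
    finally show "(case p of (i, j) \<Rightarrow> i * b + j) \<in> {..<a * b}" using p by simp
  qed (use False in auto)
  finally show ?thesis by simp
qed simp

lemma sum_list_map_upt_0: "sum_list (map f [0..<n]) = (\<Sum>k<n. f k)"
  by (simp add: sum.distinct_set_conv_list[symmetric] atLeast0LessThan)

lemma prod_list_map_upt_0: "prod_list (map f [0..<n]) = (\<Prod>k<n. f k)"
  by (simp add: prod.distinct_set_conv_list[symmetric] atLeast0LessThan)

lemma sum_if_eq_else:
  assumes "finite A" "\<alpha> \<in> A"
  shows "(\<Sum>\<beta>\<in>A. if \<beta> = \<alpha> then x else y) = x + (real (card A) - 1) * (y :: real)"
proof -
  have "(\<Sum>\<beta>\<in>A. if \<beta> = \<alpha> then x else y) = x + (\<Sum>\<beta>\<in>A - {\<alpha>}. if \<beta> = \<alpha> then x else y)"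
    using sum.remove[OF assms, of "\<lambda>\<beta>. if \<beta> = \<alpha> then x else y"] by simp
  also have "(\<Sum>\<beta>\<in>A - {\<alpha>}. if \<beta> = \<alpha> then x else y) = real (card A - 1) * y"
    using assms by simp
  also have "real (card A - 1) = real (card A) - 1"
    using assms by (subst of_nat_diff) (auto simp: Suc_le_eq card_gt_0_iff)
  finally show ?thesis .
qed

section \<open>Kronecker products and traces\<close>

lemma dim_kron [simp]:
  "dim_row (kron A B) = dim_row A * dim_row B" "dim_col (kron A B) = dim_col A * dim_col B"
  by (auto simp: kron_def)

lemma index_kron:
  "i < dim_row A * dim_row B \<Longrightarrow> j < dim_col A * dim_col B \<Longrightarrow>
   kron A B $$ (i, j) = A $$ (i div dim_row B, j div dim_col B) * B $$ (i mod dim_row B, j mod dim_col B)"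
  by (simp add: kron_def)

lemma kron_mult:
  assumes A: "A \<in> carrier_mat a1 a2" and C: "C \<in> carrier_mat a2 a3"
    and B: "B \<in> carrier_mat b1 b2" and D: "D \<in> carrier_mat b2 b3"
  shows "kron A B * kron C D = kron (A * C) (B * D)"
proof (rule eq_matI)
  fix i j assume "i < dim_row (kron (A * C) (B * D))" "j < dim_col (kron (A * C) (B * D))"
  then have i: "i < a1 * b1" and j: "j < a3 * b3" using A B C D by auto
  then have "b1 > 0" "b3 > 0" by (auto intro: Nat.gr0I)
  then have idx: "i div b1 < a1" "i mod b1 < b1" "j div b3 < a3" "j mod b3 < b3"
    using i j by (auto simp: less_mult_imp_div_less)
  have "(kron A B * kron C D) $$ (i, j) = (\<Sum>k<a2 * b2. kron A B $$ (i, k) * kron C D $$ (k, j))"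
    using A B C D i j by (simp add: scalar_prod_def atLeast0LessThan)
  also have "\<dots> = (\<Sum>k<a2 * b2. (A $$ (i div b1, k div b2) * B $$ (i mod b1, k mod b2)) *
       (C $$ (k div b2, j div b3) * D $$ (k mod b2, j mod b3)))"
    using A B C D i j by (intro sum.cong refl) (simp add: index_kron)
  also have "\<dots> = (\<Sum>k1<a2. \<Sum>k2<b2. (A $$ (i div b1, k1) * B $$ (i mod b1, k2)) *
       (C $$ (k1, j div b3) * D $$ (k2, j mod b3)))"
    by (rule sum_lessThan_mult_div_mod)
  also have "\<dots> = (\<Sum>k1<a2. A $$ (i div b1, k1) * C $$ (k1, j div b3)) *
      (\<Sum>k2<b2. B $$ (i mod b1, k2) * D $$ (k2, j mod b3))"
    by (simp add: sum_product mult_ac)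
  also have "\<dots> = kron (A * C) (B * D) $$ (i, j)"
    using A B C D i j idx by (simp add: index_kron scalar_prod_def atLeast0LessThan)
  finally show "(kron A B * kron C D) $$ (i, j) = kron (A * C) (B * D) $$ (i, j)" .
qed (use A B C D in simp_all)

lemma trace_kron:
  assumes "A \<in> carrier_mat n n" "B \<in> carrier_mat p p"
  shows "trace (kron A B) = trace A * trace B"
proof -
  have "trace (kron A B) = (\<Sum>k<n * p. A $$ (k div p, k div p) * B $$ (k mod p, k mod p))"
    unfolding trace_def using assms by (intro sum.cong) (auto simp: index_kron)
  also have "\<dots> = (\<Sum>i<n. \<Sum>j<p. A $$ (i, i) * B $$ (j, j))" by (rule sum_lessThan_mult_div_mod)
  finally show ?thesis using assms by (simp add: trace_def sum_product)
qed

lemma kron_list_carrier: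
  "(\<And>i. i \<in> set xs \<Longrightarrow> f i \<in> carrier_mat (d i) (d i)) \<Longrightarrow>
   kron_list (map f xs) \<in> carrier_mat (prod_list (map d xs)) (prod_list (map d xs))"
proof (induction xs)
  case (Cons x xs)
  then have "kron_list (map f xs) \<in> carrier_mat (prod_list (map d xs)) (prod_list (map d xs))"
    "f x \<in> carrier_mat (d x) (d x)" by auto
  then show ?case by (intro carrier_matI) (auto simp: carrier_matD)
qed simp

lemma trace_kron_list_mult:
  "(\<And>i. i \<in> set xs \<Longrightarrow> f i \<in> carrier_mat (d i) (d i) \<and> g i \<in> carrier_mat (d i) (d i)) \<Longrightarrow>
   trace (kron_list (map f xs) * kron_list (map g xs)) = prod_list (map (\<lambda>i. trace (f i * g i)) xs)"
proof (induction xs)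
  case Nil
  then show ?case by (simp add: trace_def)
next
  case (Cons x xs)
  have f: "f x \<in> carrier_mat (d x) (d x)" and g: "g x \<in> carrier_mat (d x) (d x)"
    using Cons.prems by auto
  let ?D = "prod_list (map d xs)"
  have F: "kron_list (map f xs) \<in> carrier_mat ?D ?D" and G: "kron_list (map g xs) \<in> carrier_mat ?D ?D"
    using Cons.prems by (auto intro!: kron_list_carrier)
  have "trace (kron_list (map f (x # xs)) * kron_list (map g (x # xs))) =
        trace (kron (f x * g x) (kron_list (map f xs) * kron_list (map g xs)))"
    using kron_mult[OF f g F G] by simp
  also have "\<dots> = trace (f x * g x) * trace (kron_list (map f xs) * kron_list (map g xs))"
    using f g F G by (intro trace_kron) auto
  finally show ?case using Cons.IH Cons.prems by simp
qed

lemma trace_add: "A \<in> carrier_mat n n \<Longrightarrow> B \<in> carrier_mat n n \<Longrightarrow> trace (A + B) = trace A + trace B"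
  by (simp add: trace_def sum.distrib)

lemma trace_smult: "A \<in> carrier_mat n n \<Longrightarrow> trace (c \<cdot>\<^sub>m A) = c * trace A"
  by (simp add: trace_def sum_distrib_left)

lemma foldr_add_carrier:
  "(\<And>k. k \<in> set ks \<Longrightarrow> F k \<in> carrier_mat n n) \<Longrightarrow> foldr (+) (map F ks) (0\<^sub>m n n) \<in> carrier_mat n n"
  by (induction ks) auto

lemma trace_mult_foldr_add_right:
  assumes "X \<in> carrier_mat n n" "\<And>k. k \<in> set ks \<Longrightarrow> F k \<in> carrier_mat n n"
  shows "trace (X * foldr (+) (map F ks) (0\<^sub>m n n)) = (\<Sum>k\<leftarrow>ks. trace (X * F k))"
  using assms(2)
proof (induction ks)
  case (Cons k ks)
  have Fk: "F k \<in> carrier_mat n n" and S: "foldr (+) (map F ks) (0\<^sub>m n n) \<in> carrier_mat n n"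
    using Cons.prems by (auto intro!: foldr_add_carrier)
  have "X * (F k + foldr (+) (map F ks) (0\<^sub>m n n)) = X * F k + X * foldr (+) (map F ks) (0\<^sub>m n n)"
    using assms(1) Fk S by (simp add: mult_add_distrib_mat)
  then show ?case
    using Cons.IH Cons.prems trace_add[OF mult_carrier_mat[OF assms(1) Fk] mult_carrier_mat[OF assms(1) S]] by simp
qed (use assms(1) in \<open>simp add: trace_def\<close>)

lemma trace_mult_foldr_add_left:
  assumes "X \<in> carrier_mat n n" "\<And>k. k \<in> set ks \<Longrightarrow> F k \<in> carrier_mat n n"
  shows "trace (foldr (+) (map F ks) (0\<^sub>m n n) * X) = (\<Sum>k\<leftarrow>ks. trace (F k * X))"
  using assms(2)
proof (induction ks)
  case (Cons k ks)
  have Fk: "F k \<in> carrier_mat n n" and S: "foldr (+) (map F ks) (0\<^sub>m n n) \<in> carrier_mat n n"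
    using Cons.prems by (auto intro!: foldr_add_carrier)
  have "(F k + foldr (+) (map F ks) (0\<^sub>m n n)) * X = F k * X + foldr (+) (map F ks) (0\<^sub>m n n) * X"
    using assms(1) Fk S by (simp add: add_mult_distrib_mat)
  then show ?case
    using Cons.IH Cons.prems trace_add[OF mult_carrier_mat[OF Fk assms(1)] mult_carrier_mat[OF S assms(1)]] by simp
qed (use assms(1) in \<open>simp add: trace_def\<close>)

section \<open>Positive semidefinite forms\<close>

text \<open>Square matrices are handled through their entry functions \<open>nat \<Rightarrow> nat \<Rightarrow> complex\<close>,
  which makes rank-one updates free of dimension bookkeeping.\<close>

abbreviation entries :: "'a mat \<Rightarrow> nat \<Rightarrow> nat \<Rightarrow> 'a" where
  "entries A \<equiv> \<lambda>i j. A $$ (i, j)"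

definition qform :: "nat \<Rightarrow> (nat \<Rightarrow> nat \<Rightarrow> complex) \<Rightarrow> (nat \<Rightarrow> complex) \<Rightarrow> complex" where
  "qform n F x = (\<Sum>i<n. cnj (x i) * (\<Sum>j<n. F i j * x j))"

definition pos_form :: "nat \<Rightarrow> (nat \<Rightarrow> nat \<Rightarrow> complex) \<Rightarrow> bool" where
  "pos_form n F \<longleftrightarrow> (\<forall>x. Im (qform n F x) = 0 \<and> 0 \<le> Re (qform n F x))"

definition herm_form :: "nat \<Rightarrow> (nat \<Rightarrow> nat \<Rightarrow> complex) \<Rightarrow> bool" where
  "herm_form n F \<longleftrightarrow> (\<forall>i<n. \<forall>j<n. F j i = cnj (F i j))"

definition trace_prod :: "nat \<Rightarrow> (nat \<Rightarrow> nat \<Rightarrow> complex) \<Rightarrow> (nat \<Rightarrow> nat \<Rightarrow> complex) \<Rightarrow> complex" where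
  "trace_prod n F G = (\<Sum>i<n. \<Sum>j<n. F i j * G j i)"

lemma psd_pos_form: "psd n A \<Longrightarrow> pos_form n (entries A)"
  unfolding pos_form_def
proof
  fix x :: "nat \<Rightarrow> complex"
  assume psd: "psd n A"
  then have A: "A \<in> carrier_mat n n" unfolding psd_def by auto
  have "(\<Sum>i<n. cnj (vec n x $ i) * (A *\<^sub>v vec n x) $ i) = qform n (entries A) x"
    unfolding qform_def using A by (intro sum.cong refl) (simp add: scalar_prod_def atLeast0LessThan)
  then show "Im (qform n (entries A) x) = 0 \<and> 0 \<le> Re (qform n (entries A) x)"
    using psd unfolding psd_def Let_def by (metis vec_carrier)
qed

lemma trace_mult_eq_trace_prod:
  assumes "A \<in> carrier_mat n n" "B \<in> carrier_mat n n"
  shows "trace (A * B) = trace_prod n (entries A) (entries B)"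
  unfolding trace_def trace_prod_def using assms
  by (intro sum.cong) (auto simp: scalar_prod_def atLeast0LessThan)

lemma trace_prod_commute: "trace_prod n F G = trace_prod n G F"
  unfolding trace_prod_def by (subst sum.swap) (simp add: mult.commute)

lemma mult_if_zero:
  "a * (if P then b else 0) = (if P then a * b else (0::'a::mult_zero))"
  "(if P then b else 0) * a = (if P then b * a else (0::'a::mult_zero))"
  by simp_all

lemma qform_unit_vector: "i < n \<Longrightarrow> qform n F (\<lambda>k. if k = i then 1 else 0) = F i i"
  unfolding qform_def by (simp add: mult_if_zero if_distrib[of cnj] cong: if_cong)

lemma qform_add_unit_vector:
  assumes "s < n"
  shows "qform n F (\<lambda>k. x k + (if k = s then t else 0)) =
    qform n F x + cnj t * (\<Sum>j<n. F s j * x j) + t * (\<Sum>i<n. cnj (x i) * F i s) + cnj t * t * F s s"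
proof -
  have inner: "(\<Sum>j<n. F i j * (x j + (if j = s then t else 0))) = (\<Sum>j<n. F i j * x j) + F i s * t" for i
    using assms by (simp add: distrib_left sum.distrib mult_if_zero)
  have "qform n F (\<lambda>k. x k + (if k = s then t else 0)) =
     (\<Sum>i<n. (cnj (x i) + (if i = s then cnj t else 0)) * ((\<Sum>j<n. F i j * x j) + F i s * t))"
    unfolding qform_def inner by (intro sum.cong) auto
  also have "\<dots> = qform n F x + (\<Sum>i<n. cnj (x i) * F i s) * t + cnj t * ((\<Sum>j<n. F s j * x j) + F s s * t)"
    unfolding qform_def using assms
    by (simp add: distrib_right distrib_left sum.distrib sum_distrib_right mult.assoc mult_if_zero)
  finally show ?thesis by (simp add: algebra_simps)
qed

lemma pos_form_diag:
  assumes "pos_form n F" "s < n"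
  shows "Im (F s s) = 0" "0 \<le> Re (F s s)"
  using assms(1) qform_unit_vector[OF assms(2), of F] unfolding pos_form_def
  by (metis (no_types, lifting))+

lemma pos_form_herm:
  assumes P: "pos_form n F" shows "herm_form n F"
  unfolding herm_form_def
proof (intro allI impI)
  fix i j assume i: "i < n" and j: "j < n"
  let ?e = "\<lambda>k. if k = i then 1 else (0::complex)"
  have expand: "qform n F (\<lambda>k. ?e k + (if k = j then t else 0)) =
      F i i + cnj t * F j i + t * F i j + cnj t * t * F j j" for t
    using qform_add_unit_vector[OF j, of F ?e t] qform_unit_vector[OF i, of F] i
    by (simp add: mult_if_zero if_distrib[of cnj] cong: if_cong)
  have real: "Im (qform n F x) = 0" for x using P unfolding pos_form_def by blast
  have "Im (F i i) = 0" "Im (F j j) = 0" using pos_form_diag(1) P i j by blast+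
  moreover have "Im (F i i + cnj t * F j i + t * F i j + cnj t * t * F j j) = 0" for t
    using real[of "\<lambda>k. ?e k + (if k = j then t else 0)"] unfolding expand .
  from this[of 1] this[of \<i>] have "Im (F i i + F j i + F i j + F j j) = 0"
    "Im (F i i - \<i> * F j i + \<i> * F i j + F j j) = 0" by simp_all
  ultimately show "F j i = cnj (F i j)" by (simp add: complex_eq_iff)
qed

lemma nonneg_quadratic_imp_le:
  fixes q a b c :: real
  assumes H: "\<And>u v. 0 \<le> q + 2 * (u * a + v * b) + c * (u\<^sup>2 + v\<^sup>2)" and "0 \<le> q" "0 \<le> c"
  shows "a\<^sup>2 + b\<^sup>2 \<le> c * q"
proof (cases "c = 0")
  case True
  show ?thesis
  proof (rule ccontr)
    assume "\<not> ?thesis"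
    then have pos: "a\<^sup>2 + b\<^sup>2 > 0" using True \<open>0 \<le> q\<close> by simp
    define r where "r = (q + 1) / (2 * (a\<^sup>2 + b\<^sup>2))"
    have "0 \<le> q + 2 * ((- r * a) * a + (- r * b) * b)" using H[of "- r * a" "- r * b"] True by simp
    also have "\<dots> = q - 2 * r * (a\<^sup>2 + b\<^sup>2)" by (simp add: algebra_simps power2_eq_square)
    also have "2 * r * (a\<^sup>2 + b\<^sup>2) = q + 1" using pos unfolding r_def by (simp add: field_simps)
    finally show False by simp
  qed
next
  case False
  then have "c > 0" using \<open>0 \<le> c\<close> by simp
  have "0 \<le> q + 2 * ((- a / c) * a + (- b / c) * b) + c * ((- a / c)\<^sup>2 + (- b / c)\<^sup>2)" by (rule H)
  also have "\<dots> = q - (a\<^sup>2 + b\<^sup>2) / c" using \<open>c > 0\<close> by (simp add: field_simps power2_eq_square)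
  finally show ?thesis using \<open>c > 0\<close> by (simp add: field_simps mult.commute)
qed

lemma pos_form_cauchy_schwarz:
  assumes P: "pos_form n F" and s: "s < n"
  shows "(cmod (\<Sum>j<n. F s j * x j))\<^sup>2 \<le> Re (F s s) * Re (qform n F x)"
proof -
  define y where "y = (\<Sum>j<n. F s j * x j)"
  have "cnj y = (\<Sum>i<n. cnj (F s i) * cnj (x i))" unfolding y_def by (simp add: cnj_sum)
  also have "\<dots> = (\<Sum>i<n. cnj (x i) * F i s)"
  proof (rule sum.cong[OF refl])
    fix i assume "i \<in> {..<n}"
    then have "F i s = cnj (F s i)" using pos_form_herm[OF P] s unfolding herm_form_def by blast
    then show "cnj (F s i) * cnj (x i) = cnj (x i) * F i s" by (simp add: mult.commute)
  qed
  finally have cy: "(\<Sum>i<n. cnj (x i) * F i s) = cnj y" ..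
  have Fss: "F s s = of_real (Re (F s s))" "0 \<le> Re (F s s)"
    using pos_form_diag[OF P s] by (simp_all add: complex_eq_iff)
  have q: "Im (qform n F x) = 0" "0 \<le> Re (qform n F x)" using P unfolding pos_form_def by auto
  have expand: "Re (Q + cnj (Complex u v) * z + Complex u v * cnj z + cnj (Complex u v) * Complex u v * of_real c)
      = Re Q + 2 * (u * Re z + v * Im z) + c * (u\<^sup>2 + v\<^sup>2)" for Q z u v c
    by (simp add: power2_eq_square algebra_simps)
  have "0 \<le> Re (qform n F x) + 2 * (u * Re y + v * Im y) + Re (F s s) * (u\<^sup>2 + v\<^sup>2)" for u v
  proof -
    have "0 \<le> Re (qform n F (\<lambda>k. x k + (if k = s then Complex u v else 0)))"
      using P unfolding pos_form_def by blast
    also have "\<dots> = Re (qform n F x) + 2 * (u * Re y + v * Im y) + Re (F s s) * (u\<^sup>2 + v\<^sup>2)"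
      unfolding qform_add_unit_vector[OF s] cy y_def[symmetric] by (subst Fss(1), rule expand)
    finally show ?thesis .
  qed
  then have "(Re y)\<^sup>2 + (Im y)\<^sup>2 \<le> Re (F s s) * Re (qform n F x)"
    using q Fss by (intro nonneg_quadratic_imp_le) auto
  then show ?thesis unfolding y_def[symmetric] by (simp add: cmod_power2)
qed

lemma pos_form_entry_bound:
  assumes "pos_form n F" "i < n" "j < n"
  shows "(cmod (F i j))\<^sup>2 \<le> Re (F i i) * Re (F j j)"
  using pos_form_cauchy_schwarz[OF assms(1,2), of "\<lambda>k. if k = j then 1 else 0"]
    qform_unit_vector[OF assms(3), of F] assms(3)
  by (simp add: mult_if_zero)

lemma qform_sub_rank1:
  "qform n (\<lambda>i j. F i j - u i * cnj (u j)) x =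
   qform n F x - cnj (\<Sum>j<n. cnj (u j) * x j) * (\<Sum>j<n. cnj (u j) * x j)"
proof -
  define w where "w = (\<Sum>j<n. cnj (u j) * x j)"
  have "qform n (\<lambda>i j. F i j - u i * cnj (u j)) x = (\<Sum>i<n. cnj (x i) * ((\<Sum>j<n. F i j * x j) - u i * w))"
    unfolding qform_def w_def
    by (intro sum.cong refl arg_cong2[where f="(*)"])
      (simp_all add: left_diff_distrib sum_subtractf sum_distrib_left mult.assoc)
  also have "\<dots> = qform n F x - (\<Sum>i<n. cnj (x i) * u i) * w"
    unfolding qform_def by (simp add: right_diff_distrib sum_subtractf sum_distrib_right mult.assoc)
  also have "(\<Sum>i<n. cnj (x i) * u i) = cnj w" unfolding w_def by (simp add: cnj_sum mult.commute)
  finally show ?thesis unfolding w_def .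
qed

lemma trace_prod_sub_rank1:
  "trace_prod n (\<lambda>i j. F i j - u i * cnj (u j)) B = trace_prod n F B - qform n B u"
proof -
  have "trace_prod n (\<lambda>i j. F i j - u i * cnj (u j)) B =
      trace_prod n F B - (\<Sum>i<n. \<Sum>j<n. u i * cnj (u j) * B j i)"
    unfolding trace_prod_def by (simp add: left_diff_distrib sum_subtractf)
  also have "(\<Sum>i<n. \<Sum>j<n. u i * cnj (u j) * B j i) = qform n B u"
    unfolding qform_def by (subst sum.swap) (simp add: sum_distrib_left mult_ac)
  finally show ?thesis .
qed

lemma pos_form_zero_pivot:
  assumes P: "pos_form n F" and "s < n" "Re (F s s) = 0" "j < n"
  shows "F s j = 0" "F j s = 0"
proof -
  show "F s j = 0" using pos_form_entry_bound[OF P assms(2,4)] assms(3) by simp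
  moreover have "F j s = cnj (F s j)" using pos_form_herm[OF P] assms(2,4) unfolding herm_form_def by blast
  ultimately show "F j s = 0" by simp
qed

text \<open>One step of a Cholesky factorisation; the remainder stays positive by Cauchy--Schwarz.\<close>

lemma pos_form_sub_pivot:
  assumes P: "pos_form n F" and s: "s < n" and pos: "0 < Re (F s s)"
  defines "u \<equiv> \<lambda>k. F k s / of_real (sqrt (Re (F s s)))"
  shows "pos_form n (\<lambda>i j. F i j - u i * cnj (u j))"
    and "\<And>j. j < n \<Longrightarrow> F s j - u s * cnj (u j) = 0 \<and> F j s - u j * cnj (u s) = 0"
proof -
  define \<alpha> where "\<alpha> = Re (F s s)"
  define c where "c = complex_of_real (sqrt \<alpha>)"
  have Fss: "F s s = of_real \<alpha>" using pos_form_diag(1)[OF P s] unfolding \<alpha>_def by (simp add: complex_eq_iff)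
  have c: "c \<noteq> 0" "cnj c = c" "c * c = of_real \<alpha>"
    using pos unfolding c_def \<alpha>_def by (simp_all flip: of_real_mult)
  have u: "u k = F k s / c" for k unfolding u_def c_def \<alpha>_def ..
  have cnj_u: "cnj (u j) = F s j / c" if "j < n" for j
  proof -
    have "F s j = cnj (F j s)" using pos_form_herm[OF P] s that unfolding herm_form_def by blast
    then show ?thesis using c unfolding u by simp
  qed
  show "pos_form n (\<lambda>i j. F i j - u i * cnj (u j))" unfolding pos_form_def
  proof
    fix x
    define y where "y = (\<Sum>j<n. F s j * x j)"
    have "(\<Sum>j<n. cnj (u j) * x j) = y / c"
      unfolding y_def sum_divide_distrib by (intro sum.cong refl) (simp add: cnj_u)
    moreover have "cnj (y / c) * (y / c) = (y * cnj y) / (c * c)" using c by (simp add: mult.commute)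
    also have "\<dots> = of_real ((cmod y)\<^sup>2 / \<alpha>)"
      unfolding c(3) complex_norm_square[symmetric] by simp
    ultimately have q: "qform n (\<lambda>i j. F i j - u i * cnj (u j)) x = qform n F x - of_real ((cmod y)\<^sup>2 / \<alpha>)"
      by (simp add: qform_sub_rank1)
    have "(cmod y)\<^sup>2 \<le> \<alpha> * Re (qform n F x)"
      using pos_form_cauchy_schwarz[OF P s] unfolding y_def \<alpha>_def .
    then have "(cmod y)\<^sup>2 / \<alpha> \<le> Re (qform n F x)" using pos unfolding \<alpha>_def by (simp add: field_simps mult.commute)
    then show "Im (qform n (\<lambda>i j. F i j - u i * cnj (u j)) x) = 0 \<and>
        0 \<le> Re (qform n (\<lambda>i j. F i j - u i * cnj (u j)) x)"
      using P unfolding q pos_form_def by simp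
  qed
  fix j assume "j < n"
  have "u s = c" unfolding u using Fss c by (simp add: field_simps)
  then show "F s j - u s * cnj (u j) = 0 \<and> F j s - u j * cnj (u s) = 0"
    using cnj_u[OF \<open>j < n\<close>] c unfolding u by simp
qed

lemma pos_form_split_rank1:
  assumes P: "pos_form n F" and s: "s < n"
    and Z: "\<And>i j. i < n \<Longrightarrow> j < n \<Longrightarrow> i < s \<or> j < s \<Longrightarrow> F i j = 0"
  obtains u where "pos_form n (\<lambda>i j. F i j - u i * cnj (u j))"
    "\<And>i j. i < n \<Longrightarrow> j < n \<Longrightarrow> i < Suc s \<or> j < Suc s \<Longrightarrow> F i j - u i * cnj (u j) = 0"
proof (cases "Re (F s s) = 0")
  case True
  show ?thesis
  proof (rule that[of "\<lambda>_. 0"])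
    show "pos_form n (\<lambda>i j. F i j - 0 * cnj 0)" using P by simp
    fix i j assume ij: "i < n" "j < n" "i < Suc s \<or> j < Suc s"
    then consider "i < s \<or> j < s" | "i = s" | "j = s" by linarith
    then show "F i j - 0 * cnj 0 = 0" using Z pos_form_zero_pivot[OF P s True] ij by cases auto
  qed
next
  case False
  then have pos: "0 < Re (F s s)" using pos_form_diag(2)[OF P s] by simp
  define u where "u k = F k s / of_real (sqrt (Re (F s s)))" for k
  have u0: "u i = 0" if "i < s" for i using Z[of i s] that s unfolding u_def by simp
  show ?thesis
  proof (rule that[of u])
    show "pos_form n (\<lambda>i j. F i j - u i * cnj (u j))"
      unfolding u_def by (rule pos_form_sub_pivot(1)[OF P s pos])
    fix i j assume ij: "i < n" "j < n" "i < Suc s \<or> j < Suc s"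
    then consider "i < s \<or> j < s" | "i = s" | "j = s" by linarith
    then show "F i j - u i * cnj (u j) = 0"
      using Z u0 pos_form_sub_pivot(2)[OF P s pos] ij unfolding u_def[symmetric] by cases auto
  qed
qed

lemma trace_prod_pos_forms_nonneg:
  assumes "pos_form n F" "pos_form n B"
  shows "Im (trace_prod n F B) = 0" "0 \<le> Re (trace_prod n F B)"
proof -
  have "Im (trace_prod n F B) = 0 \<and> 0 \<le> Re (trace_prod n F B)"
    if "pos_form n F" "\<And>i j. i < n \<Longrightarrow> j < n \<Longrightarrow> i < s \<or> j < s \<Longrightarrow> F i j = 0" for s F
    using that
  proof (induction "n - s" arbitrary: s F)
    case 0
    then have "trace_prod n F B = 0" unfolding trace_prod_def by (intro sum.neutral ballI) auto
    then show ?case by simp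
  next
    case (Suc k)
    then have "s < n" by simp
    obtain u where G: "pos_form n (\<lambda>i j. F i j - u i * cnj (u j))"
      "\<And>i j. i < n \<Longrightarrow> j < n \<Longrightarrow> i < Suc s \<or> j < Suc s \<Longrightarrow> F i j - u i * cnj (u j) = 0"
      using pos_form_split_rank1[OF Suc.prems(1) \<open>s < n\<close> Suc.prems(2)] by blast
    have "Im (trace_prod n (\<lambda>i j. F i j - u i * cnj (u j)) B) = 0 \<and>
        0 \<le> Re (trace_prod n (\<lambda>i j. F i j - u i * cnj (u j)) B)"
    proof (rule Suc.hyps(1)[OF _ G(1)])
      show "k = n - Suc s" using Suc.hyps(2) by arith
    qed (rule G(2))
    moreover have "Im (qform n B u) = 0" "0 \<le> Re (qform n B u)" using assms(2) unfolding pos_form_def by auto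
    ultimately show ?case unfolding trace_prod_sub_rank1 by simp
  qed
  from this[of F 0] assms(1) show "Im (trace_prod n F B) = 0" "0 \<le> Re (trace_prod n F B)" by auto
qed

lemma psd_trace_mult_nonneg:
  assumes "psd n A" "psd n B"
  shows "Im (trace (A * B)) = 0" "0 \<le> Re (trace (A * B))"
  using trace_prod_pos_forms_nonneg[OF psd_pos_form[OF assms(1)] psd_pos_form[OF assms(2)]]
    trace_mult_eq_trace_prod[of A n B] assms unfolding psd_def by auto

lemma psd_sum_norm_sq_entries_le:
  assumes "psd n A"
  shows "(\<Sum>i<n. \<Sum>j<n. (cmod (A $$ (i, j)))\<^sup>2) \<le> (Re (trace A))\<^sup>2"
proof -
  have "(\<Sum>i<n. \<Sum>j<n. (cmod (A $$ (i, j)))\<^sup>2) \<le> (\<Sum>i<n. \<Sum>j<n. Re (A $$ (i, i)) * Re (A $$ (j, j)))"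
    using pos_form_entry_bound[OF psd_pos_form[OF assms]] by (intro sum_mono) auto
  also have "\<dots> = (Re (trace A))\<^sup>2"
    using assms unfolding psd_def trace_def by (auto simp: power2_eq_square Re_sum sum_product)
  finally show ?thesis .
qed

lemma sum_orthogonal_combination_norm:
  fixes w :: "'b \<Rightarrow> 'i \<Rightarrow> complex"
  assumes "finite A"
    and orth: "\<And>\<alpha> \<beta>. \<alpha> \<in> A \<Longrightarrow> \<beta> \<in> A \<Longrightarrow>
      (\<Sum>i\<in>I. w \<alpha> i * cnj (w \<beta> i)) = (if \<alpha> = \<beta> then of_real N else 0)"
  shows "(\<Sum>i\<in>I. (\<Sum>\<alpha>\<in>A. c \<alpha> * w \<alpha> i) * cnj (\<Sum>\<beta>\<in>A. c \<beta> * w \<beta> i)) =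
    of_real N * (\<Sum>\<alpha>\<in>A. c \<alpha> * cnj (c \<alpha>))"
proof -
  have "(\<Sum>i\<in>I. (\<Sum>\<alpha>\<in>A. c \<alpha> * w \<alpha> i) * cnj (\<Sum>\<beta>\<in>A. c \<beta> * w \<beta> i)) =
      (\<Sum>\<alpha>\<in>A. \<Sum>\<beta>\<in>A. c \<alpha> * cnj (c \<beta>) * (\<Sum>i\<in>I. w \<alpha> i * cnj (w \<beta> i)))"
    by (simp add: cnj_sum sum_distrib_left sum_distrib_right mult_ac)
      (subst sum.swap, simp add: sum.swap[of _ I])
  also have "\<dots> = (\<Sum>\<alpha>\<in>A. \<Sum>\<beta>\<in>A. if \<alpha> = \<beta> then of_real N * (c \<alpha> * cnj (c \<alpha>)) else 0)"
    by (intro sum.cong refl) (simp add: orth)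
  finally show ?thesis using assms(1) by (simp add: sum_distrib_left)
qed

lemma bessel_inequality:
  fixes w :: "'b \<Rightarrow> 'i \<Rightarrow> complex" and r :: "'i \<Rightarrow> complex"
  assumes "finite I" "finite A" "N > 0"
    and orth: "\<And>\<alpha> \<beta>. \<alpha> \<in> A \<Longrightarrow> \<beta> \<in> A \<Longrightarrow>
      (\<Sum>i\<in>I. w \<alpha> i * cnj (w \<beta> i)) = (if \<alpha> = \<beta> then of_real N else 0)"
  shows "(\<Sum>\<alpha>\<in>A. (cmod (\<Sum>i\<in>I. cnj (w \<alpha> i) * r i))\<^sup>2) \<le> N * (\<Sum>i\<in>I. (cmod (r i))\<^sup>2)"
proof -
  define g where "g \<alpha> = (\<Sum>i\<in>I. cnj (w \<alpha> i) * r i)" for \<alpha>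
  define c where "c \<alpha> = g \<alpha> / of_real N" for \<alpha>
  define z where "z i = (\<Sum>\<alpha>\<in>A. c \<alpha> * w \<alpha> i)" for i
  define C where "C = (\<Sum>\<alpha>\<in>A. (cmod (c \<alpha>))\<^sup>2)"
  have CC: "of_real C = (\<Sum>\<alpha>\<in>A. c \<alpha> * cnj (c \<alpha>))"
    unfolding C_def by (simp only: of_real_sum complex_norm_square)
  have "(\<Sum>i\<in>I. r i * cnj (z i)) = (\<Sum>\<alpha>\<in>A. cnj (c \<alpha>) * g \<alpha>)"
    unfolding z_def g_def
    by (simp add: cnj_sum sum_distrib_left sum_distrib_right mult_ac) (rule sum.swap)
  also have "\<dots> = of_real N * of_real C"
    unfolding CC sum_distrib_left using \<open>N > 0\<close> by (intro sum.cong refl) (simp add: c_def)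
  finally have rz: "(\<Sum>i\<in>I. r i * cnj (z i)) = of_real (N * C)" by simp
  have "(\<Sum>i\<in>I. z i * cnj (r i)) = cnj (\<Sum>i\<in>I. r i * cnj (z i))" by (simp add: cnj_sum mult.commute)
  with rz have zr: "(\<Sum>i\<in>I. z i * cnj (r i)) = of_real (N * C)" by simp
  have "(\<Sum>i\<in>I. z i * cnj (z i)) = of_real N * of_real C"
    unfolding z_def CC by (rule sum_orthogonal_combination_norm[OF assms(2) orth])
  then have zz: "(\<Sum>i\<in>I. z i * cnj (z i)) = of_real (N * C)" by simp
  have "of_real (\<Sum>i\<in>I. (cmod (r i - z i))\<^sup>2) = (\<Sum>i\<in>I. (r i - z i) * cnj (r i - z i))"
    by (simp only: of_real_sum complex_norm_square)
  also have "\<dots> = (\<Sum>i\<in>I. r i * cnj (r i)) - (\<Sum>i\<in>I. r i * cnj (z i))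
      - (\<Sum>i\<in>I. z i * cnj (r i)) + (\<Sum>i\<in>I. z i * cnj (z i))"
    by (simp add: algebra_simps sum.distrib sum_subtractf)
  also have "\<dots> = of_real ((\<Sum>i\<in>I. (cmod (r i))\<^sup>2) - N * C)"
    unfolding rz zr zz by (simp add: of_real_sum flip: complex_norm_square)
  finally have "N * C \<le> (\<Sum>i\<in>I. (cmod (r i))\<^sup>2)"
    using sum_nonneg[of I "\<lambda>i. (cmod (r i - z i))\<^sup>2"] by (simp only: of_real_eq_iff) simp
  moreover have "(\<Sum>\<alpha>\<in>A. (cmod (g \<alpha>))\<^sup>2) = N * (N * C)"
    unfolding C_def c_def using \<open>N > 0\<close>
    by (simp add: sum_distrib_left norm_divide power_divide power2_eq_square)
  ultimately show ?thesis unfolding g_def using \<open>N > 0\<close> by simp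
qed

section \<open>General SIC-POVMs\<close>

lemma general_sic_povm_psd: "general_sic_povm n a P \<Longrightarrow> \<alpha> < n\<^sup>2 \<Longrightarrow> psd n (P \<alpha>)"
  unfolding general_sic_povm_def by blast

lemma general_sic_povm_carrier: "general_sic_povm n a P \<Longrightarrow> \<alpha> < n\<^sup>2 \<Longrightarrow> P \<alpha> \<in> carrier_mat n n"
  using general_sic_povm_psd unfolding psd_def by blast

lemma general_sic_povm_complete: "general_sic_povm n a P \<Longrightarrow> foldr (+) (map P [0..<n\<^sup>2]) (0\<^sub>m n n) = 1\<^sub>m n"
  unfolding general_sic_povm_def by blast

lemma general_sic_povm_overlap:
  "general_sic_povm n a P \<Longrightarrow> \<alpha> < n\<^sup>2 \<Longrightarrow> \<beta> < n\<^sup>2 \<Longrightarrow> trace (P \<alpha> * P \<beta>) =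
     of_real (if \<alpha> = \<beta> then a else (1 - real n * a) / (real n * (real n ^ 2 - 1)))"
  unfolding general_sic_povm_def by auto

lemma general_sic_povm_prob_nonneg:
  assumes "general_sic_povm n a P" "psd n \<rho>" "\<alpha> < n\<^sup>2"
  shows "Im (trace (P \<alpha> * \<rho>)) = 0" "0 \<le> Re (trace (P \<alpha> * \<rho>))"
  using psd_trace_mult_nonneg[OF general_sic_povm_psd[OF assms(1,3)] assms(2)] by auto

lemma general_sic_povm_prob_sum:
  assumes S: "general_sic_povm n a P" and "density_matrix n \<rho>"
  shows "(\<Sum>\<alpha><n\<^sup>2. Re (trace (P \<alpha> * \<rho>))) = 1"
proof -
  have \<rho>: "\<rho> \<in> carrier_mat n n" "trace \<rho> = 1"
    using assms(2) unfolding density_matrix_def psd_def by auto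
  have "(\<Sum>\<alpha><n\<^sup>2. trace (P \<alpha> * \<rho>)) = trace (foldr (+) (map P [0..<n\<^sup>2]) (0\<^sub>m n n) * \<rho>)"
    using general_sic_povm_carrier[OF S] \<rho>(1)
    by (subst trace_mult_foldr_add_left[of _ n]) (auto simp: sum_list_map_upt_0)
  also have "\<dots> = 1" using \<rho> unfolding general_sic_povm_complete[OF S] by simp
  finally show ?thesis by (simp flip: Re_sum)
qed

lemma general_sic_povm_trace:
  assumes "2 \<le> n" and S: "general_sic_povm n a P" and "\<alpha> < n\<^sup>2"
  shows "trace (P \<alpha>) = of_real (1 / real n)"
proof -
  define b where "b = (1 - real n * a) / (real n * (real n ^ 2 - 1))"
  have P\<alpha>: "P \<alpha> \<in> carrier_mat n n" by (rule general_sic_povm_carrier[OF S assms(3)])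
  have "trace (P \<alpha>) = trace (P \<alpha> * foldr (+) (map P [0..<n\<^sup>2]) (0\<^sub>m n n))"
    using P\<alpha> unfolding general_sic_povm_complete[OF S] by simp
  also have "\<dots> = (\<Sum>\<beta><n\<^sup>2. of_real (if \<beta> = \<alpha> then a else b))"
    using general_sic_povm_carrier[OF S] P\<alpha>
    by (subst trace_mult_foldr_add_right[of _ n])
      (auto simp: sum_list_map_upt_0 general_sic_povm_overlap[OF S assms(3)] b_def intro!: sum.cong)
  also have "\<dots> = of_real (a + (real (n\<^sup>2) - 1) * b)"
    using assms(3) by (subst of_real_sum[symmetric], subst sum_if_eq_else) auto
  also have "a + (real (n\<^sup>2) - 1) * b = 1 / real n"
  proof -
    have "1 < real n ^ 2" using \<open>2 \<le> n\<close> by (intro one_less_power) auto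
    then have "real n ^ 2 - 1 \<noteq> 0" by simp
    then show ?thesis using \<open>2 \<le> n\<close> unfolding b_def
      by (simp add: field_simps del: of_nat_power) (simp add: algebra_simps)
  qed
  finally show ?thesis .
qed

definition shift_diag :: "real \<Rightarrow> (nat \<Rightarrow> nat \<Rightarrow> complex) \<Rightarrow> nat \<Rightarrow> nat \<Rightarrow> complex" where
  "shift_diag t F i j = F i j - (if i = j then of_real t else 0)"

lemma trace_prod_shift_diag_left:
  "trace_prod n (shift_diag t F) G = trace_prod n F G - of_real t * (\<Sum>i<n. G i i)"
  unfolding trace_prod_def shift_diag_def
  by (simp add: left_diff_distrib sum_subtractf sum_distrib_left mult_if_zero)

lemma trace_prod_shift_diag:
  "trace_prod n (shift_diag t F) (shift_diag t G) =
   trace_prod n F G - of_real t * ((\<Sum>i<n. F i i) + (\<Sum>i<n. G i i)) + of_nat n * (of_real t)\<^sup>2"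
proof -
  have diag: "(\<Sum>i<n. shift_diag t G i i) = (\<Sum>i<n. G i i) - of_nat n * of_real t"
    unfolding shift_diag_def by (simp add: sum_subtractf)
  have "trace_prod n (shift_diag t F) (shift_diag t G) =
      trace_prod n F (shift_diag t G) - of_real t * (\<Sum>i<n. shift_diag t G i i)"
    by (rule trace_prod_shift_diag_left)
  also have "trace_prod n F (shift_diag t G) = trace_prod n F G - of_real t * (\<Sum>i<n. F i i)"
    by (simp only: trace_prod_commute[of n F] trace_prod_shift_diag_left)
  finally show ?thesis unfolding diag by (simp add: algebra_simps power2_eq_square)
qed

lemma herm_form_shift_diag:
  assumes "herm_form n F" shows "herm_form n (shift_diag t F)"
  unfolding herm_form_def
proof (intro allI impI)
  fix i j assume "i < n" "j < n"
  then have "F j i = cnj (F i j)" using assms unfolding herm_form_def by blast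
  then show "shift_diag t F j i = cnj (shift_diag t F i j)" unfolding shift_diag_def by simp
qed

lemma sum_pairs_cnj_herm_form:
  assumes "herm_form n F"
  shows "(\<Sum>p\<in>{..<n} \<times> {..<n}. cnj (F (fst p) (snd p)) * G (fst p) (snd p)) = trace_prod n F G"
proof -
  have "(\<Sum>p\<in>{..<n} \<times> {..<n}. cnj (F (fst p) (snd p)) * G (fst p) (snd p)) =
      (\<Sum>i<n. \<Sum>j<n. cnj (F i j) * G i j)"
    by (simp add: sum.cartesian_product split_def)
  also have "\<dots> = (\<Sum>i<n. \<Sum>j<n. G i j * F j i)"
  proof (intro sum.cong refl)
    fix i j assume "i \<in> {..<n}" "j \<in> {..<n}"
    then have "F j i = cnj (F i j)" using assms unfolding herm_form_def by blast
    then show "cnj (F i j) * G i j = G i j * F j i" by simp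
  qed
  also have "\<dots> = trace_prod n F G" by (metis trace_prod_commute trace_prod_def)
  finally show ?thesis .
qed

lemma sic_overlap_less:
  assumes "2 \<le> n" "1 / real n ^ 3 < a"
  shows "(1 - real n * a) / (real n * (real n ^ 2 - 1)) < 1 / real n ^ 3"
proof -
  have "1 < real n ^ 2" using assms(1) by (intro one_less_power) auto
  have "1 < real n ^ 3 * a" using assms by (simp add: field_simps)
  then have "(1 - real n * a) * real n ^ 3 < 1 * (real n * (real n ^ 2 - 1))"
    using assms(1) by (simp add: algebra_simps power2_eq_square power3_eq_cube)
  moreover have "0 < real n * (real n ^ 2 - 1)" "0 < real n ^ 3"
    using \<open>1 < real n ^ 2\<close> assms(1) by auto
  ultimately show ?thesis by (simp add: divide_less_eq less_divide_eq mult.commute)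
qed

text \<open>For such \<open>t\<close> the shifted operators \<open>P \<alpha> - t \<cdot> 1\<close> are pairwise orthogonal in the
  Hilbert--Schmidt inner product.\<close>

lemma sic_shift_exists:
  assumes "2 \<le> n" "1 / real n ^ 3 < a"
  obtains t where "real n * t\<^sup>2 - 2 * t / real n + (1 - real n * a) / (real n * (real n ^ 2 - 1)) = 0"
proof -
  define b where "b = (1 - real n * a) / (real n * (real n ^ 2 - 1))"
  have "real n * b < real n * (1 / real n ^ 3)"
    unfolding b_def using assms(1) by (intro mult_strict_left_mono sic_overlap_less assms) auto
  then have "0 \<le> discrim (real n) (- 2 / real n) b"
    using assms(1) unfolding discrim_def by (simp add: power2_eq_square power3_eq_cube field_simps)
  then obtain t where "real n * t\<^sup>2 + (- 2 / real n) * t + b = 0"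
    using discriminant_nonneg_ex[of "real n"] assms(1) by fastforce
  then show ?thesis using that unfolding b_def by (simp add: algebra_simps)
qed

definition sic_coincidence_bound :: "nat \<Rightarrow> real \<Rightarrow> real" where
  "sic_coincidence_bound n a = (a * real n ^ 2 + 1) / (real n * (real n + 1))"

lemma sic_coincidence_bound_eq:
  assumes n: "2 \<le> n" and b: "b = (1 - real n * a) / (real n * (real n ^ 2 - 1))"
    and t: "real n * t\<^sup>2 - 2 * t / real n + b = 0"
  shows "a - b + 2 * t - real n ^ 2 * t\<^sup>2 = sic_coincidence_bound n a"
proof -
  have "real n ^ 2 * t\<^sup>2 = 2 * t - real n * b"
    using t n by (simp add: field_simps power2_eq_square)
  then have "a - b + 2 * t - real n ^ 2 * t\<^sup>2 = a + (real n - 1) * b" by (simp add: algebra_simps)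
  also have "(real n - 1) * b = (1 - real n * a) / (real n * (real n + 1))"
  proof -
    have "real n ^ 2 - 1 = (real n - 1) * (real n + 1)" by (simp add: algebra_simps power2_eq_square)
    moreover have "real n - 1 \<noteq> 0" using n by simp
    ultimately show ?thesis unfolding b by simp
  qed
  also have "a + (1 - real n * a) / (real n * (real n + 1)) = sic_coincidence_bound n a"
  proof -
    have "real n * (real n + 1) \<noteq> 0" using n by simp
    then show ?thesis unfolding sic_coincidence_bound_def
      by (simp add: add_divide_eq_iff algebra_simps power2_eq_square)
  qed
  finally show ?thesis .
qed

lemma general_sic_povm_herm_shift:
  "general_sic_povm n a P \<Longrightarrow> \<alpha> < n\<^sup>2 \<Longrightarrow> herm_form n (shift_diag t (entries (P \<alpha>)))"
  by (intro herm_form_shift_diag pos_form_herm psd_pos_form general_sic_povm_psd)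

lemma general_sic_povm_shift_orthogonal:
  assumes n: "2 \<le> n" and S: "general_sic_povm n a P" and "\<alpha> < n\<^sup>2" "\<beta> < n\<^sup>2"
    and b: "b = (1 - real n * a) / (real n * (real n ^ 2 - 1))"
    and t: "real n * t\<^sup>2 - 2 * t / real n + b = 0"
  shows "trace_prod n (shift_diag t (entries (P \<alpha>))) (shift_diag t (entries (P \<beta>))) =
    (if \<alpha> = \<beta> then of_real (a - b) else 0)"
proof -
  have diag: "(\<Sum>i<n. P \<gamma> $$ (i, i)) = of_real (1 / real n)" if "\<gamma> < n\<^sup>2" for \<gamma>
    using general_sic_povm_trace[OF n S that] general_sic_povm_carrier[OF S that]
    unfolding trace_def by simp
  have "trace_prod n (shift_diag t (entries (P \<alpha>))) (shift_diag t (entries (P \<beta>))) =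
      trace (P \<alpha> * P \<beta>) - of_real (2 * t / real n - real n * t\<^sup>2)"
    using assms(3,4) general_sic_povm_carrier[OF S]
    by (simp add: trace_prod_shift_diag diag trace_mult_eq_trace_prod[of _ n] field_simps power2_eq_square)
  also have "\<dots> = (if \<alpha> = \<beta> then of_real (a - b) else 0)"
    using general_sic_povm_overlap[OF S assms(3,4)] t unfolding b[symmetric]
    by (auto simp flip: of_real_diff)
  finally show ?thesis .
qed

lemma trace_prod_shift_diag_density:
  assumes "A \<in> carrier_mat n n" "density_matrix n \<rho>"
  shows "trace_prod n (shift_diag t (entries A)) (entries \<rho>) = trace (A * \<rho>) - of_real t"
proof -
  have "\<rho> \<in> carrier_mat n n" "(\<Sum>i<n. \<rho> $$ (i, i)) = 1"
    using assms(2) unfolding density_matrix_def psd_def trace_def by auto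
  then show ?thesis using trace_mult_eq_trace_prod[OF assms(1)] by (simp add: trace_prod_shift_diag_left)
qed

lemma general_sic_povm_sum_sq_prob_le:
  assumes n: "2 \<le> n" and S: "general_sic_povm n a P" and R: "density_matrix n \<rho>"
  shows "(\<Sum>\<alpha><n\<^sup>2. (Re (trace (P \<alpha> * \<rho>)))\<^sup>2) \<le> sic_coincidence_bound n a"
proof -
  define b where "b = (1 - real n * a) / (real n * (real n ^ 2 - 1))"
  define p where "p \<alpha> = Re (trace (P \<alpha> * \<rho>))" for \<alpha>
  have a: "1 / real n ^ 3 < a" using S unfolding general_sic_povm_def by blast
  have "b < a" using sic_overlap_less[OF n a] a unfolding b_def by linarith
  obtain t where t: "real n * t\<^sup>2 - 2 * t / real n + b = 0"
    using sic_shift_exists[OF n a] unfolding b_def by blast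
  have \<rho>: "psd n \<rho>" "trace \<rho> = 1" using R unfolding density_matrix_def by auto
  define w where "w \<alpha> q = shift_diag t (entries (P \<alpha>)) (fst q) (snd q)" for \<alpha> q
  have "(\<Sum>q\<in>{..<n} \<times> {..<n}. w \<alpha> q * cnj (w \<beta> q)) = (if \<alpha> = \<beta> then of_real (a - b) else 0)"
    if "\<alpha> \<in> {..<n\<^sup>2}" "\<beta> \<in> {..<n\<^sup>2}" for \<alpha> \<beta>
    using sum_pairs_cnj_herm_form[OF general_sic_povm_herm_shift[OF S], of \<beta> t "shift_diag t (entries (P \<alpha>))"]
      general_sic_povm_shift_orthogonal[OF n S _ _ b_def t, of \<beta> \<alpha>] that
    unfolding w_def by (auto simp: mult.commute)
  moreover have "(\<Sum>q\<in>{..<n} \<times> {..<n}. cnj (w \<alpha> q) * \<rho> $$ (fst q, snd q)) = of_real (p \<alpha> - t)"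
    if "\<alpha> \<in> {..<n\<^sup>2}" for \<alpha>
    using sum_pairs_cnj_herm_form[OF general_sic_povm_herm_shift[OF S], of \<alpha> t "entries \<rho>"]
      trace_prod_shift_diag_density[OF general_sic_povm_carrier[OF S] R, of \<alpha> t]
      general_sic_povm_prob_nonneg(1)[OF S \<rho>(1), of \<alpha>] that
    unfolding w_def p_def by (simp add: complex_eq_iff)
  ultimately have "(\<Sum>\<alpha><n\<^sup>2. (p \<alpha> - t)\<^sup>2) \<le> (a - b) * (\<Sum>q\<in>{..<n} \<times> {..<n}. (cmod (\<rho> $$ (fst q, snd q)))\<^sup>2)"
    using bessel_inequality[of "{..<n} \<times> {..<n}" "{..<n\<^sup>2}" "a - b" w "\<lambda>q. \<rho> $$ (fst q, snd q)"] \<open>b < a\<close>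
    by (simp flip: of_real_diff)
  also have "\<dots> \<le> a - b"
    using psd_sum_norm_sq_entries_le[OF \<rho>(1)] \<rho>(2) \<open>b < a\<close>
    by (simp add: sum.cartesian_product split_def mult_le_cancel_left1)
  also have "a - b = sic_coincidence_bound n a - 2 * t + real n ^ 2 * t\<^sup>2"
    using sic_coincidence_bound_eq[OF n b_def t] by simp
  finally have "(\<Sum>\<alpha><n\<^sup>2. (p \<alpha>)\<^sup>2) - 2 * t * (\<Sum>\<alpha><n\<^sup>2. p \<alpha>) + real n ^ 2 * t\<^sup>2 \<le>
      sic_coincidence_bound n a - 2 * t + real n ^ 2 * t\<^sup>2"
    by (simp add: power2_diff sum.distrib sum_subtractf sum_distrib_left mult_ac)
  moreover have "(\<Sum>\<alpha><n\<^sup>2. p \<alpha>) = 1" unfolding p_def by (rule general_sic_povm_prob_sum[OF S R])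
  ultimately show ?thesis unfolding p_def by simp
qed

section \<open>Separable states\<close>

lemma sum_comp_inj_on_le:
  fixes h :: "'a \<Rightarrow> 'c::ordered_comm_monoid_add"
  assumes "inj_on s A" "s ` A \<subseteq> B" "finite B" "\<And>x. x \<in> B \<Longrightarrow> 0 \<le> h x"
  shows "(\<Sum>j\<in>A. h (s j)) \<le> (\<Sum>x\<in>B. h x)"
proof -
  have "(\<Sum>j\<in>A. h (s j)) = (\<Sum>x\<in>s ` A. h x)" using assms(1) by (simp add: sum.reindex)
  also have "\<dots> \<le> (\<Sum>x\<in>B. h x)" using assms(2-4) by (intro sum_mono2) auto
  finally show ?thesis .
qed

lemma prod_le_mult_two_factors:
  fixes y :: "'a \<Rightarrow> real"
  assumes "finite I" "i \<in> I" "k \<in> I" "i \<noteq> k" "\<And>x. x \<in> I \<Longrightarrow> 0 \<le> y x \<and> y x \<le> 1"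
  shows "(\<Prod>x\<in>I. y x) \<le> y i * y k"
proof -
  have "(\<Prod>x\<in>I. y x) = y i * (y k * (\<Prod>x\<in>I - {i} - {k}. y x))"
    using assms by (simp add: prod.remove[of I i] prod.remove[of "I - {i}" k])
  also have "\<dots> \<le> y i * (y k * 1)"
    using assms by (intro mult_left_mono prod_le_1) auto
  finally show ?thesis by simp
qed

lemma sum_prod_le_sqrt_mult:
  fixes y :: "'a \<Rightarrow> 'b \<Rightarrow> real"
  assumes "finite I" "i \<in> I" "k \<in> I" "i \<noteq> k"
    and unit: "\<And>x j. x \<in> I \<Longrightarrow> j \<in> A \<Longrightarrow> 0 \<le> y x j \<and> y x j \<le> 1"
    and sq: "\<And>x. x \<in> I \<Longrightarrow> (\<Sum>j\<in>A. (y x j)\<^sup>2) \<le> C x"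
  shows "(\<Sum>j\<in>A. \<Prod>x\<in>I. y x j) \<le> sqrt (C i) * sqrt (C k)"
proof -
  have C_nonneg: "0 \<le> C x" if "x \<in> I" for x
    using sq[OF that] sum_nonneg[of A "\<lambda>j. (y x j)\<^sup>2"] by simp
  have "(\<Sum>j\<in>A. \<Prod>x\<in>I. y x j) \<le> (\<Sum>j\<in>A. \<bar>y i j\<bar> * \<bar>y k j\<bar>)"
  proof (rule sum_mono)
    fix j assume "j \<in> A"
    then have "(\<Prod>x\<in>I. y x j) \<le> y i j * y k j"
      using assms(1-4) unit by (intro prod_le_mult_two_factors) auto
    then show "(\<Prod>x\<in>I. y x j) \<le> \<bar>y i j\<bar> * \<bar>y k j\<bar>" by (simp add: abs_mult[symmetric])
  qed
  also have "\<dots> \<le> L2_set (y i) A * L2_set (y k) A" by (rule L2_set_mult_ineq)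
  also have "\<dots> \<le> sqrt (C i) * sqrt (C k)"
    unfolding L2_set_def using assms(2,3) sq C_nonneg by (intro mult_mono real_sqrt_le_mono) (auto intro: sum_nonneg)
  finally show ?thesis .
qed

lemma trace_kron_list_mult_separable:
  assumes Q: "\<And>i. i < m \<Longrightarrow> Q i \<in> carrier_mat (d i) (d i)"
    and R: "\<And>k i. k < K \<Longrightarrow> i < m \<Longrightarrow> R k i \<in> carrier_mat (d i) (d i)"
  shows "trace (kron_list (map Q [0..<m]) *
      foldr (+) (map (\<lambda>k. of_real (p k) \<cdot>\<^sub>m kron_list (map (R k) [0..<m])) [0..<K])
        (0\<^sub>m (\<Prod>i<m. d i) (\<Prod>i<m. d i)))
    = (\<Sum>k<K. of_real (p k) * (\<Prod>i<m. trace (Q i * R k i)))"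
proof -
  define D where "D = (\<Prod>i<m. d i)"
  have dims: "prod_list (map d [0..<m]) = D" unfolding D_def by (rule prod_list_map_upt_0)
  have KQ: "kron_list (map Q [0..<m]) \<in> carrier_mat D D"
    using kron_list_carrier[of "[0..<m]" Q d] Q unfolding dims by auto
  have KR: "kron_list (map (R k) [0..<m]) \<in> carrier_mat D D" if "k < K" for k
    using kron_list_carrier[of "[0..<m]" "R k" d] R that unfolding dims by auto
  have "trace (kron_list (map Q [0..<m]) * (of_real (p k) \<cdot>\<^sub>m kron_list (map (R k) [0..<m]))) =
      of_real (p k) * (\<Prod>i<m. trace (Q i * R k i))" if "k < K" for k
  proof -
    have "trace (kron_list (map Q [0..<m]) * (of_real (p k) \<cdot>\<^sub>m kron_list (map (R k) [0..<m]))) =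
        of_real (p k) * trace (kron_list (map Q [0..<m]) * kron_list (map (R k) [0..<m]))"
      using KQ KR[OF that] by (simp add: mult_smult_distrib trace_smult[of _ D])
    also have "trace (kron_list (map Q [0..<m]) * kron_list (map (R k) [0..<m])) =
        (\<Prod>i<m. trace (Q i * R k i))"
      using Q R that by (subst trace_kron_list_mult[of _ Q d]) (auto simp: prod_list_map_upt_0)
    finally show ?thesis .
  qed
  then show ?thesis
    unfolding D_def[symmetric] using KQ KR
    by (subst trace_mult_foldr_add_right[of _ D]) (auto simp: sum_list_map_upt_0)
qed

lemma inj_tuples_memD:
  assumes "\<sigma> \<in> inj_tuples m d" "i < m"
  shows "\<sigma> i ` {..<min_sq_dim m d} \<subseteq> {..<d i ^ 2}" "inj_on (\<sigma> i) {..<min_sq_dim m d}"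
  using assms unfolding inj_tuples_def by (auto simp: PiE_iff)

lemma min_sq_dim_le: "i < m \<Longrightarrow> min_sq_dim m d \<le> d i ^ 2"
  unfolding min_sq_dim_def by (intro Min_le) auto

lemma finite_inj_tuples: "finite (inj_tuples m d)"
  unfolding inj_tuples_def
proof (intro finite_PiE)
  fix i
  show "finite {s \<in> {..<min_sq_dim m d} \<rightarrow>\<^sub>E {..<d i ^ 2}. inj_on s {..<min_sq_dim m d}}"
    by (rule finite_subset[of _ "{..<min_sq_dim m d} \<rightarrow>\<^sub>E {..<d i ^ 2}"]) (auto intro: finite_PiE)
qed simp

lemma inj_tuples_nonempty: "inj_tuples m d \<noteq> {}"
proof -
  have "(\<lambda>i\<in>{..<m}. \<lambda>j\<in>{..<min_sq_dim m d}. j) \<in> inj_tuples m d"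
    unfolding inj_tuples_def using min_sq_dim_le[of _ m d]
    by (auto simp: PiE_iff inj_on_def) (meson order_less_le_trans)
  then show ?thesis by blast
qed

lemma product_state_sic_sum_le:
  assumes dims: "\<And>i. i < m \<Longrightarrow> 2 \<le> d i"
    and S: "\<And>i. i < m \<Longrightarrow> general_sic_povm (d i) (a i) (P i)"
    and R: "\<And>i. i < m \<Longrightarrow> density_matrix (d i) (R i)"
    and \<sigma>: "\<sigma> \<in> inj_tuples m d" and "i0 < m" "k0 < m" "i0 \<noteq> k0"
  shows "(\<Sum>j<min_sq_dim m d. \<Prod>i<m. Re (trace (P i (\<sigma> i j) * R i))) \<le>
    sqrt (sic_coincidence_bound (d i0) (a i0)) * sqrt (sic_coincidence_bound (d k0) (a k0))"
proof (rule sum_prod_le_sqrt_mult)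
  fix i j assume i: "i \<in> {..<m}" and j: "j \<in> {..<min_sq_dim m d}"
  have R': "psd (d i) (R i)" using R i unfolding density_matrix_def by auto
  have \<sigma>ij: "\<sigma> i j < d i ^ 2" using inj_tuples_memD(1)[OF \<sigma>] i j by auto
  have "Re (trace (P i (\<sigma> i j) * R i)) \<le> (\<Sum>\<alpha><d i ^ 2. Re (trace (P i \<alpha> * R i)))"
    using general_sic_povm_prob_nonneg(2)[OF S R'] i \<sigma>ij by (intro member_le_sum) auto
  then show "0 \<le> Re (trace (P i (\<sigma> i j) * R i)) \<and> Re (trace (P i (\<sigma> i j) * R i)) \<le> 1"
    using general_sic_povm_prob_nonneg(2)[OF S R' \<sigma>ij] general_sic_povm_prob_sum[OF S R] i by auto
next
  fix i assume i: "i \<in> {..<m}"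
  have R': "psd (d i) (R i)" using R i unfolding density_matrix_def by auto
  have "(\<Sum>j<min_sq_dim m d. (Re (trace (P i (\<sigma> i j) * R i)))\<^sup>2) \<le>
      (\<Sum>\<alpha><d i ^ 2. (Re (trace (P i \<alpha> * R i)))\<^sup>2)"
    using inj_tuples_memD[OF \<sigma>] i by (intro sum_comp_inj_on_le) auto
  also have "\<dots> \<le> sic_coincidence_bound (d i) (a i)"
    using general_sic_povm_sum_sq_prob_le[OF dims S R] i by auto
  finally show "(\<Sum>j<min_sq_dim m d. (Re (trace (P i (\<sigma> i j) * R i)))\<^sup>2) \<le> sic_coincidence_bound (d i) (a i)" .
qed (use assms in auto)

lemma separable_sic_sum_le:
  assumes dims: "\<And>i. i < m \<Longrightarrow> 2 \<le> d i"
    and S: "\<And>i. i < m \<Longrightarrow> general_sic_povm (d i) (a i) (P i)"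
    and sep: "fully_separable m d \<rho>" and \<sigma>: "\<sigma> \<in> inj_tuples m d" and "i0 < m" "k0 < m" "i0 \<noteq> k0"
  shows "Re (\<Sum>j<min_sq_dim m d. trace (kron_list (map (\<lambda>i. P i (\<sigma> i j)) [0..<m]) * \<rho>)) \<le>
    sqrt (sic_coincidence_bound (d i0) (a i0)) * sqrt (sic_coincidence_bound (d k0) (a k0))"
proof -
  define B where "B = sqrt (sic_coincidence_bound (d i0) (a i0)) * sqrt (sic_coincidence_bound (d k0) (a k0))"
  from sep obtain K p R where p: "\<forall>k<K. 0 \<le> p k" "(\<Sum>k<K. p k) = 1"
    and R: "\<forall>k<K. \<forall>i<m. density_matrix (d i) (R k i)"
    and \<rho>: "\<rho> = foldr (+) (map (\<lambda>k. of_real (p k) \<cdot>\<^sub>m kron_list (map (R k) [0..<m])) [0..<K])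
              (0\<^sub>m (\<Prod>i<m. d i) (\<Prod>i<m. d i))"
    unfolding fully_separable_def by blast
  have psdR: "psd (d i) (R k i)" if "k < K" "i < m" for k i
    using R that unfolding density_matrix_def by auto
  then have Rc: "R k i \<in> carrier_mat (d i) (d i)" if "k < K" "i < m" for k i
    using that unfolding psd_def by auto
  define y where "y k i j = Re (trace (P i (\<sigma> i j) * R k i))" for k i j
  have \<sigma>ij: "\<sigma> i j < d i ^ 2" if "i < m" "j < min_sq_dim m d" for i j
    using inj_tuples_memD(1)[OF \<sigma>] that by auto
  have "trace (P i (\<sigma> i j) * R k i) = of_real (y k i j)"
    if "k < K" "i < m" "j < min_sq_dim m d" for k i j
    using general_sic_povm_prob_nonneg(1)[OF S[OF that(2)] psdR[OF that(1,2)] \<sigma>ij[OF that(2,3)]]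
    unfolding y_def by (simp add: complex_eq_iff)
  then have "trace (kron_list (map (\<lambda>i. P i (\<sigma> i j)) [0..<m]) * \<rho>) =
      of_real (\<Sum>k<K. p k * (\<Prod>i<m. y k i j))" if "j < min_sq_dim m d" for j
    unfolding \<rho> using that \<sigma>ij
    by (subst trace_kron_list_mult_separable[of _ _ d]) (auto intro!: general_sic_povm_carrier S Rc)
  then have "(\<Sum>j<min_sq_dim m d. trace (kron_list (map (\<lambda>i. P i (\<sigma> i j)) [0..<m]) * \<rho>)) =
      (\<Sum>j<min_sq_dim m d. of_real (\<Sum>k<K. p k * (\<Prod>i<m. y k i j)))"
    by (intro sum.cong) auto
  then have "Re (\<Sum>j<min_sq_dim m d. trace (kron_list (map (\<lambda>i. P i (\<sigma> i j)) [0..<m]) * \<rho>)) =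
      (\<Sum>j<min_sq_dim m d. \<Sum>k<K. p k * (\<Prod>i<m. y k i j))"
    by (simp only: Re_sum Re_complex_of_real)
  also have "\<dots> = (\<Sum>k<K. p k * (\<Sum>j<min_sq_dim m d. \<Prod>i<m. y k i j))"
    by (subst sum.swap) (simp add: sum_distrib_left)
  also have "\<dots> \<le> (\<Sum>k<K. p k * B)"
    unfolding B_def y_def using p R
    by (intro sum_mono mult_left_mono product_state_sic_sum_le[OF dims S _ \<sigma> assms(5-7)]) auto
  also have "\<dots> = B" using p by (simp flip: sum_distrib_right)
  finally show ?thesis unfolding B_def .
qed

lemma J_val_separable_le:
  assumes "\<And>i. i < m \<Longrightarrow> 2 \<le> d i" "\<And>i. i < m \<Longrightarrow> general_sic_povm (d i) (a i) (P i)"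
    and "fully_separable m d \<rho>" "i0 < m" "k0 < m" "i0 \<noteq> k0"
  shows "J_val m d P \<rho> \<le>
    sqrt (sic_coincidence_bound (d i0) (a i0)) * sqrt (sic_coincidence_bound (d k0) (a k0))"
  unfolding J_val_def using separable_sic_sum_le[OF assms(1-3) _ assms(4-6)] finite_inj_tuples inj_tuples_nonempty
  by (intro Max.boundedI) auto

theorem theorem4:
  fixes m :: nat and d :: "nat \<Rightarrow> nat" and a :: "nat \<Rightarrow> real"
    and P :: "nat \<Rightarrow> nat \<Rightarrow> complex mat" and \<rho> :: "complex mat"
  assumes "m \<ge> 2"
    and "\<forall>i<m. d i \<ge> 2"
    and "density_matrix (\<Prod>i<m. d i) \<rho>"
    and "\<forall>i<m. general_sic_povm (d i) (a i) (P i)"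
    and "fully_separable m d \<rho>"
  shows "J_val m d P \<rho> \<le>
    Min {sqrt ((a i * real (d i) ^ 2 + 1) / (real (d i) * (real (d i) + 1))) *
         sqrt ((a k * real (d k) ^ 2 + 1) / (real (d k) * (real (d k) + 1))) | i k. i < m \<and> k < m \<and> i \<noteq> k}"
proof -
  define c where "c i = sqrt (sic_coincidence_bound (d i) (a i))" for i
  have "{sqrt ((a i * real (d i) ^ 2 + 1) / (real (d i) * (real (d i) + 1))) *
         sqrt ((a k * real (d k) ^ 2 + 1) / (real (d k) * (real (d k) + 1))) | i k. i < m \<and> k < m \<and> i \<noteq> k}
      = {c i * c k | i k. i < m \<and> k < m \<and> i \<noteq> k}"
    unfolding c_def sic_coincidence_bound_def ..
  moreover have "finite {c i * c k | i k. i < m \<and> k < m \<and> i \<noteq> k}"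
    by (rule finite_subset[of _ "(\<lambda>(i, k). c i * c k) ` ({..<m} \<times> {..<m})"]) auto
  moreover have "c 0 * c 1 \<in> {c i * c k | i k. i < m \<and> k < m \<and> i \<noteq> k}"
    using \<open>m \<ge> 2\<close> by force
  moreover have "J_val m d P \<rho> \<le> c i * c k" if "i < m" "k < m" "i \<noteq> k" for i k
    unfolding c_def using J_val_separable_le assms(2,4,5) that by blast
  ultimately show ?thesis by (auto intro!: Min.boundedI)
qed

end
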